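(* For every integer $p\geq1$ and every $\alpha>0$ there exists $C=C(\alpha,p)>0$ such that the following holds. Let $\pi$ be the Ising measure on $N$ spins (no external field) with couplings $\{J_{ij}\}$, and let $\tilde\pi$ be the Ising measure with couplings $\{|J_{ij}|\}$. Suppose $\tilde\pi$ is $(1-\alpha/N)$-contracting. Let $B=(b_{i_1,\dots,i_p})$ be a real tensor of order $p$ indexed by $\{1,\dots,N\}^p$ and $h(\sigma)=\sum_{i_1,\dots,i_p}b_{i_1,\dots,i_p}\sigma_{i_1}\cdots\sigma_{i_p}$. Then $$|\mathbb E_\pi[h(\sigma)]|\leq C\,\|B\|_\infty\,N^{p/2},$$ where $\|B\|_\infty=\max_{i_1,\dots,i_p}|b_{i_1,\dots,i_p}|$.
   Context: Spin configurations are $\sigma\in\Omega_N=\{\pm1\}^N$. For real couplings $\{J_{ij}\}$, the Ising measure (no external field) is $\pi(\sigma)=\mathcal Z^{-1}\exp\big(\sum_{i,j}J_{ij}\sigma_i\sigma_j\big)$. An Ising measure is $\theta$-contracting if there is a discrete-time Markov chain on $\Omega_N$ with that stationary measure, changing at most one coordinate per step, such that $\max_{\sigma,\sigma':\|\sigma-\sigma'\|_1=1}W_1(\mathbb P_\sigma(X_1\in\cdot),\mathbb P_{\sigma'}(X_1\in\cdot))\leq\theta<1$, with $W_1$ the $L^1$-Wasserstein distance w.r.t. $\|\cdot\|_1$. *)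

theory Defs
  imports "HOL-Analysis.Analysis"
begin

type_synonym spin = "nat \<Rightarrow> real"

definition Omega :: "nat \<Rightarrow> spin set" where
  "Omega N = {\<sigma>. (\<forall>i<N. \<sigma> i = 1 \<or> \<sigma> i = -1) \<and> (\<forall>i\<ge>N. \<sigma> i = 0)}"

definition ising_weight :: "nat \<Rightarrow> (nat \<Rightarrow> nat \<Rightarrow> real) \<Rightarrow> spin \<Rightarrow> real" where
  "ising_weight N J \<sigma> = exp (\<Sum>i<N. \<Sum>j<N. J i j * \<sigma> i * \<sigma> j)"

definition ising :: "nat \<Rightarrow> (nat \<Rightarrow> nat \<Rightarrow> real) \<Rightarrow> spin \<Rightarrow> real" where
  "ising N J \<sigma> = ising_weight N J \<sigma> / (\<Sum>\<tau>\<in>Omega N. ising_weight N J \<tau>)"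

definition ham :: "nat \<Rightarrow> spin \<Rightarrow> spin \<Rightarrow> real" where
  "ham N \<sigma> \<tau> = real (card {i. i < N \<and> \<sigma> i \<noteq> \<tau> i})"

definition is_coupling :: "nat \<Rightarrow> (spin \<Rightarrow> real) \<Rightarrow> (spin \<Rightarrow> real) \<Rightarrow> (spin \<times> spin \<Rightarrow> real) \<Rightarrow> bool" where
  "is_coupling N \<mu> \<nu> q \<longleftrightarrow>
     (\<forall>x y. q (x, y) \<ge> 0) \<and>
     (\<forall>x\<in>Omega N. (\<Sum>y\<in>Omega N. q (x, y)) = \<mu> x) \<and>
     (\<forall>y\<in>Omega N. (\<Sum>x\<in>Omega N. q (x, y)) = \<nu> y)"

definition W1 :: "nat \<Rightarrow> (spin \<Rightarrow> real) \<Rightarrow> (spin \<Rightarrow> real) \<Rightarrow> real" where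
  "W1 N \<mu> \<nu> = Inf {(\<Sum>z\<in>Omega N \<times> Omega N. q z * ham N (fst z) (snd z)) | q. is_coupling N \<mu> \<nu> q}"

definition single_site_chain :: "nat \<Rightarrow> (spin \<Rightarrow> real) \<Rightarrow> (spin \<Rightarrow> spin \<Rightarrow> real) \<Rightarrow> bool" where
  "single_site_chain N \<pi> P \<longleftrightarrow>
     (\<forall>\<sigma>\<in>Omega N. \<forall>\<tau>\<in>Omega N. P \<sigma> \<tau> \<ge> 0) \<and>
     (\<forall>\<sigma>\<in>Omega N. (\<Sum>\<tau>\<in>Omega N. P \<sigma> \<tau>) = 1) \<and>
     (\<forall>\<tau>\<in>Omega N. (\<Sum>\<sigma>\<in>Omega N. \<pi> \<sigma> * P \<sigma> \<tau>) = \<pi> \<tau>) \<and>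
     (\<forall>\<sigma>\<in>Omega N. \<forall>\<tau>\<in>Omega N. P \<sigma> \<tau> \<noteq> 0 \<longrightarrow> ham N \<sigma> \<tau> \<le> 1)"

definition contracting :: "nat \<Rightarrow> (nat \<Rightarrow> nat \<Rightarrow> real) \<Rightarrow> real \<Rightarrow> bool" where
  "contracting N J \<theta> \<longleftrightarrow> \<theta> < 1 \<and>
     (\<exists>P. single_site_chain N (ising N J) P \<and>
        (\<forall>\<sigma>\<in>Omega N. \<forall>\<sigma>'\<in>Omega N. ham N \<sigma> \<sigma>' = 1 \<longrightarrow> W1 N (P \<sigma>) (P \<sigma>') \<le> \<theta>))"

definition tuples :: "nat \<Rightarrow> nat \<Rightarrow> nat list set" where
  "tuples N p = {is. length is = p \<and> set is \<subseteq> {..<N}}"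

definition tensor_poly :: "nat \<Rightarrow> nat \<Rightarrow> (nat list \<Rightarrow> real) \<Rightarrow> spin \<Rightarrow> real" where
  "tensor_poly N p b \<sigma> = (\<Sum>is\<in>tuples N p. b is * (\<Prod>k<p. \<sigma> (is ! k)))"

definition tensor_sup :: "nat \<Rightarrow> nat \<Rightarrow> (nat list \<Rightarrow> real) \<Rightarrow> real" where
  "tensor_sup N p b = Max ((\<lambda>is. \<bar>b is\<bar>) ` tuples N p)"

end

theory Submission
  imports Defs
begin

text \<open>Ginibre's inequality bounds each correlation \<open>E\<^sub>\<pi>[\<sigma>\<^sub>i\<^sub>1 \<cdots> \<sigma>\<^sub>i\<^sub>p]\<close> in absolute value
  by the same correlation under the ferromagnetic measure \<open>\<pi>'\<close> with couplings \<open>\<bar>J i j\<bar>\<close>, and these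
  are nonnegative by Griffiths' inequality. Summing over index tuples,
  \<open>\<bar>E\<^sub>\<pi> h\<bar> \<le> \<parallel>B\<parallel>\<^sub>\<infinity> E\<^sub>\<pi>'[S\<^sup>p]\<close> for the magnetization \<open>S = \<Sum>\<^sub>i \<sigma>\<^sub>i\<close>.

  \<open>S\<close> changes by at most 2 under a spin flip. If a single-site chain \<open>P\<close> contracts by \<open>\<theta>\<close>, then
  \<open>P\<^sup>T f\<close> is \<open>\<theta>\<^sup>T L\<close>-Lipschitz whenever \<open>f\<close> is \<open>L\<close>-Lipschitz, and a one-step Hoeffding bound gives
  \<open>E exp (s f) \<le> exp (4 s\<^sup>2 L\<^sup>2) E exp (s P f)\<close>. Iterating, and letting \<open>T \<rightarrow> \<infinity>\<close> so that \<open>P\<^sup>T f\<close>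
  becomes the constant \<open>E f\<close>, gives \<open>E exp (s f) \<le> exp (4 s\<^sup>2 L\<^sup>2 / (1 - \<theta>\<^sup>2)) exp (s E f)\<close>.
  For \<open>f = S\<close> (mean zero by the symmetry \<open>\<sigma> \<mapsto> -\<sigma>\<close>), \<open>\<theta> = 1 - \<alpha>/N\<close> and \<open>s = 1/(4 \<surd>N)\<close> the
  exponent is at most \<open>1/\<alpha>\<close>, which bounds \<open>E\<^sub>\<pi>'|S|\<^sup>p\<close> by a constant times \<open>N\<^sup>p\<^sup>/\<^sup>2\<close>.\<close>

section \<open>Spin configurations and monomials\<close>

lemma finite_Omega [simp]: "finite (Omega N)"
proof -
  have "Omega N \<subseteq> {\<sigma>. \<forall>i. (i \<in> {..<N} \<longrightarrow> \<sigma> i \<in> {1, -1}) \<and> (i \<notin> {..<N} \<longrightarrow> \<sigma> i = 0)}"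
    by (auto simp: Omega_def)
  then show ?thesis
    by (rule finite_subset) (intro finite_set_of_finite_funs; simp)
qed

lemma Omega_spin: "\<sigma> \<in> Omega N \<Longrightarrow> i < N \<Longrightarrow> \<sigma> i = 1 \<or> \<sigma> i = -1"
  by (simp add: Omega_def)

lemma Omega_outside: "\<sigma> \<in> Omega N \<Longrightarrow> N \<le> i \<Longrightarrow> \<sigma> i = 0"
  by (simp add: Omega_def)

lemma abs_Omega_le_1: "\<sigma> \<in> Omega N \<Longrightarrow> \<bar>\<sigma> i\<bar> \<le> 1"
  by (cases "i < N") (auto simp: Omega_def)

lemma sum_involution:
  assumes "\<And>x. x \<in> A \<Longrightarrow> g x \<in> A" and "\<And>x. x \<in> A \<Longrightarrow> g (g x) = x"
  shows "sum f A = (\<Sum>x\<in>A. f (g x))"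
  by (rule sum.reindex_bij_witness[of _ g g]) (use assms in auto)

definition spin_monomial :: "nat list \<Rightarrow> spin \<Rightarrow> real" where
  "spin_monomial xs \<sigma> = prod_list (map \<sigma> xs)"

lemma spin_monomial_Nil [simp]: "spin_monomial [] \<sigma> = 1"
  and spin_monomial_Cons [simp]: "spin_monomial (i # xs) \<sigma> = \<sigma> i * spin_monomial xs \<sigma>"
  and spin_monomial_append: "spin_monomial (xs @ ys) \<sigma> = spin_monomial xs \<sigma> * spin_monomial ys \<sigma>"
  by (simp_all add: spin_monomial_def)

lemma spin_monomial_conv_nth: "(\<Prod>k<length xs. \<sigma> (xs ! k)) = spin_monomial xs \<sigma>"
  by (induction xs) (simp_all add: prod.lessThan_Suc_shift del: prod.lessThan_Suc)

lemma spin_monomial_conv_count: "spin_monomial xs \<sigma> = (\<Prod>i\<in>set xs. \<sigma> i ^ count_list xs i)"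
  unfolding spin_monomial_def
  by (simp flip: prod_mset_prod_list add: image_prod_mset_multiplicity[of \<sigma> "mset xs", simplified] count_mset)

lemma abs_spin_monomial_le_1: "\<sigma> \<in> Omega N \<Longrightarrow> \<bar>spin_monomial xs \<sigma>\<bar> \<le> 1"
  by (induction xs) (simp_all add: abs_mult abs_Omega_le_1 mult_le_one)

definition spin_flip :: "nat \<Rightarrow> spin \<Rightarrow> spin" where
  "spin_flip i \<sigma> = \<sigma>(i := - \<sigma> i)"

lemma spin_flip_Omega: "i < N \<Longrightarrow> \<sigma> \<in> Omega N \<Longrightarrow> spin_flip i \<sigma> \<in> Omega N"
  by (auto simp: spin_flip_def Omega_def)

lemma spin_flip_flip [simp]: "spin_flip i (spin_flip i \<sigma>) = \<sigma>"
  by (auto simp: spin_flip_def)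

lemma spin_monomial_flip: "spin_monomial xs (spin_flip i \<sigma>) = (-1) ^ count_list xs i * spin_monomial xs \<sigma>"
  by (induction xs) (simp_all add: spin_flip_def)

text \<open>If some site occurs an odd number of times, flipping it shows that the sum vanishes;
  otherwise every term is a product of even powers.\<close>

lemma sum_spin_monomial_nonneg: "0 \<le> (\<Sum>\<sigma>\<in>Omega N. spin_monomial xs \<sigma>)"
proof (cases "\<exists>i<N. odd (count_list xs i)")
  case True
  then obtain i where "i < N" "odd (count_list xs i)" by blast
  then have "(\<Sum>\<sigma>\<in>Omega N. spin_monomial xs \<sigma>) = - (\<Sum>\<sigma>\<in>Omega N. spin_monomial xs \<sigma>)"
    by (subst sum_involution[of _ "spin_flip i"])
       (simp_all add: spin_flip_Omega spin_monomial_flip sum_negf)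
  then show ?thesis by simp
next
  case False
  have "0 \<le> \<sigma> i ^ count_list xs i" if "\<sigma> \<in> Omega N" for \<sigma> i
    using False that by (cases "i < N") (auto simp: zero_le_even_power Omega_outside)
  then show ?thesis
    by (intro sum_nonneg) (simp add: spin_monomial_conv_count prod_nonneg)
qed

definition spin_times :: "spin \<Rightarrow> spin \<Rightarrow> spin" where
  "spin_times \<sigma> \<tau> = (\<lambda>i. \<sigma> i * \<tau> i)"

lemma spin_times_Omega:
  assumes "\<sigma> \<in> Omega N" and "\<tau> \<in> Omega N"
  shows "spin_times \<sigma> \<tau> \<in> Omega N"
proof -
  have "\<sigma> i * \<tau> i = 1 \<or> \<sigma> i * \<tau> i = -1" if "i < N" for i
    using Omega_spin[OF assms(1) that] Omega_spin[OF assms(2) that] by auto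
  then show ?thesis using assms by (auto simp: Omega_def spin_times_def)
qed

lemma spin_times_cancel: "\<sigma> \<in> Omega N \<Longrightarrow> \<tau> \<in> Omega N \<Longrightarrow> spin_times \<sigma> (spin_times \<sigma> \<tau>) = \<tau>"
proof
  fix i assume \<sigma>: "\<sigma> \<in> Omega N" and \<tau>: "\<tau> \<in> Omega N"
  show "spin_times \<sigma> (spin_times \<sigma> \<tau>) i = \<tau> i"
    using Omega_spin[OF \<sigma>, of i] Omega_outside[OF \<tau>, of i]
    by (cases "i < N") (auto simp: spin_times_def)
qed

lemma spin_monomial_times:
  "spin_monomial xs (spin_times \<sigma> \<tau>) = spin_monomial xs \<sigma> * spin_monomial xs \<tau>"
  by (induction xs) (simp_all add: spin_times_def)

section \<open>Expectations and exponential moments\<close>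

definition expect :: "nat \<Rightarrow> (spin \<Rightarrow> real) \<Rightarrow> (spin \<Rightarrow> real) \<Rightarrow> real" where
  "expect N \<mu> f = (\<Sum>\<sigma>\<in>Omega N. \<mu> \<sigma> * f \<sigma>)"

definition is_distribution :: "nat \<Rightarrow> (spin \<Rightarrow> real) \<Rightarrow> bool" where
  "is_distribution N \<mu> \<longleftrightarrow> (\<forall>\<sigma>\<in>Omega N. 0 \<le> \<mu> \<sigma>) \<and> (\<Sum>\<sigma>\<in>Omega N. \<mu> \<sigma>) = 1"

lemma expect_add: "expect N \<mu> (\<lambda>\<sigma>. f \<sigma> + g \<sigma>) = expect N \<mu> f + expect N \<mu> g"
  by (simp add: expect_def distrib_left sum.distrib)

lemma expect_diff: "expect N \<mu> (\<lambda>\<sigma>. f \<sigma> - g \<sigma>) = expect N \<mu> f - expect N \<mu> g"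
  by (simp add: expect_def right_diff_distrib sum_subtractf)

lemma expect_cmult: "expect N \<mu> (\<lambda>\<sigma>. c * f \<sigma>) = c * expect N \<mu> f"
  by (simp add: expect_def sum_distrib_left mult.left_commute)

lemma expect_sum: "expect N \<mu> (\<lambda>\<sigma>. \<Sum>x\<in>A. f x \<sigma>) = (\<Sum>x\<in>A. expect N \<mu> (f x))"
  unfolding expect_def by (simp add: sum_distrib_left) (rule sum.swap)

lemma expect_const: "is_distribution N \<mu> \<Longrightarrow> expect N \<mu> (\<lambda>_. c) = c"
  by (simp add: expect_def is_distribution_def flip: sum_distrib_right)

lemma expect_mono:
  assumes "is_distribution N \<mu>" and "\<And>\<sigma>. \<sigma> \<in> Omega N \<Longrightarrow> \<mu> \<sigma> \<noteq> 0 \<Longrightarrow> f \<sigma> \<le> g \<sigma>"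
  shows "expect N \<mu> f \<le> expect N \<mu> g"
  unfolding expect_def
proof (rule sum_mono)
  fix \<sigma> assume "\<sigma> \<in> Omega N"
  then show "\<mu> \<sigma> * f \<sigma> \<le> \<mu> \<sigma> * g \<sigma>"
    using assms by (cases "\<mu> \<sigma> = 0") (auto simp: is_distribution_def intro: mult_left_mono)
qed

lemma expect_nonneg:
  "is_distribution N \<mu> \<Longrightarrow> (\<And>\<sigma>. \<sigma> \<in> Omega N \<Longrightarrow> 0 \<le> f \<sigma>) \<Longrightarrow> 0 \<le> expect N \<mu> f"
  unfolding expect_def is_distribution_def by (simp add: sum_nonneg)

lemma abs_expect_le: "is_distribution N \<mu> \<Longrightarrow> \<bar>expect N \<mu> f\<bar> \<le> expect N \<mu> (\<lambda>\<sigma>. \<bar>f \<sigma>\<bar>)"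
  unfolding expect_def is_distribution_def
  by (rule order_trans[OF sum_abs]) (simp add: abs_mult)

lemma abs_expect_diff_le:
  assumes \<mu>: "is_distribution N \<mu>" and "\<And>\<sigma>. \<sigma> \<in> Omega N \<Longrightarrow> \<mu> \<sigma> \<noteq> 0 \<Longrightarrow> \<bar>f \<sigma> - a\<bar> \<le> r"
  shows "\<bar>expect N \<mu> f - a\<bar> \<le> r"
proof -
  have "\<bar>expect N \<mu> f - a\<bar> = \<bar>expect N \<mu> (\<lambda>\<sigma>. f \<sigma> - a)\<bar>"
    by (simp add: expect_diff expect_const[OF \<mu>])
  also have "\<dots> \<le> expect N \<mu> (\<lambda>_. r)"
    by (rule order_trans[OF abs_expect_le[OF \<mu>] expect_mono[OF \<mu> assms(2)]])
  finally show ?thesis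
    by (simp add: expect_const[OF \<mu>])
qed

lemma exp_le_quadratic:
  fixes y :: real
  assumes "\<bar>y\<bar> \<le> 1"
  shows "exp y \<le> 1 + y + y\<^sup>2"
proof (cases "0 \<le> y")
  case True
  then show ?thesis using exp_bound[of y] assms by simp
next
  case False
  define x where "x = - y"
  have x: "0 \<le> x" "x \<le> 1" using False assms by (auto simp: x_def)
  have "1 - x + x\<^sup>2 = (x - 1/2)\<^sup>2 + 3/4"
    by (simp add: power2_eq_square algebra_simps)
  then have pos: "0 < 1 - x + x\<^sup>2"
    by (metis add_pos_nonneg zero_le_power2 zero_less_divide_iff zero_less_numeral add.commute)
  have "(1 + x + x\<^sup>2 / 2) * (1 - x + x\<^sup>2) = 1 + (x\<^sup>2 + x ^ 3 + x ^ 4) / 2"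
    by (simp add: field_simps power2_eq_square power3_eq_cube power4_eq_xxxx)
  then have "1 \<le> (1 + x + x\<^sup>2 / 2) * (1 - x + x\<^sup>2)"
    using x by simp
  also have "\<dots> \<le> exp x * (1 - x + x\<^sup>2)"
    using pos by (intro mult_right_mono exp_lower_Taylor_quadratic x) simp_all
  finally have "1 / exp x \<le> 1 - x + x\<^sup>2"
    by (simp add: divide_le_eq mult.commute)
  then show ?thesis
    by (simp add: x_def exp_minus inverse_eq_divide)
qed

lemma expect_exp_le:
  assumes \<mu>: "is_distribution N \<mu>" and "d \<le> 1"
    and dev: "\<And>\<sigma>. \<sigma> \<in> Omega N \<Longrightarrow> \<mu> \<sigma> \<noteq> 0 \<Longrightarrow> \<bar>c * (f \<sigma> - expect N \<mu> f)\<bar> \<le> d"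
  shows "expect N \<mu> (\<lambda>\<sigma>. exp (c * f \<sigma>)) \<le> exp (d\<^sup>2) * exp (c * expect N \<mu> f)"
proof -
  define m where "m = expect N \<mu> f"
  have "expect N \<mu> (\<lambda>\<sigma>. exp (c * f \<sigma>)) = expect N \<mu> (\<lambda>\<sigma>. exp (c * m) * exp (c * (f \<sigma> - m)))"
    by (simp add: algebra_simps flip: exp_add)
  also have "\<dots> = exp (c * m) * expect N \<mu> (\<lambda>\<sigma>. exp (c * (f \<sigma> - m)))"
    by (rule expect_cmult)
  also have "expect N \<mu> (\<lambda>\<sigma>. exp (c * (f \<sigma> - m))) \<le> expect N \<mu> (\<lambda>\<sigma>. 1 + c * (f \<sigma> - m) + d\<^sup>2)"
  proof (rule expect_mono[OF \<mu>])
    fix \<sigma> assume "\<sigma> \<in> Omega N" "\<mu> \<sigma> \<noteq> 0"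
    then have y: "\<bar>c * (f \<sigma> - m)\<bar> \<le> d"
      unfolding m_def by (rule dev)
    have "(c * (f \<sigma> - m))\<^sup>2 = \<bar>c * (f \<sigma> - m)\<bar>\<^sup>2"
      by simp
    also have "\<dots> \<le> d\<^sup>2"
      by (rule power_mono[OF y abs_ge_zero])
    finally show "exp (c * (f \<sigma> - m)) \<le> 1 + c * (f \<sigma> - m) + d\<^sup>2"
      using exp_le_quadratic[of "c * (f \<sigma> - m)"] y \<open>d \<le> 1\<close> by linarith
  qed
  also have "expect N \<mu> (\<lambda>\<sigma>. 1 + c * (f \<sigma> - m) + d\<^sup>2) = 1 + d\<^sup>2"
    unfolding expect_add expect_cmult expect_diff expect_const[OF \<mu>] m_def by simp
  also have "1 + d\<^sup>2 \<le> exp (d\<^sup>2)"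
    by (rule exp_ge_add_one_self)
  finally show ?thesis
    by (simp add: m_def mult.commute)
qed

lemma power_div_fact_le_exp:
  fixes t :: real
  assumes "0 \<le> t"
  shows "t ^ n / fact n \<le> exp t"
proof -
  have "(\<Sum>k\<in>{n}. t ^ k /\<^sub>R fact k) \<le> (\<Sum>k. t ^ k /\<^sub>R fact k)"
    using assms by (intro sum_le_suminf summable_exp_generic) auto
  then show ?thesis
    by (simp add: exp_def divide_inverse mult.commute)
qed

lemma abs_power_le_exp:
  fixes x s :: real
  assumes "0 < s"
  shows "\<bar>x\<bar> ^ p \<le> fact p / s ^ p * (exp (s * x) + exp (- s * x))"
proof -
  have "(s * \<bar>x\<bar>) ^ p / fact p \<le> exp (s * \<bar>x\<bar>)"
    using assms by (intro power_div_fact_le_exp) simp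
  also have "\<dots> \<le> exp (s * x) + exp (- s * x)"
    by (cases "0 \<le> x") simp_all
  finally show ?thesis
    using assms by (simp add: field_simps)
qed

lemma expect_power_le_exp_moments:
  assumes \<mu>: "is_distribution N \<mu>" and "0 < s"
  shows "expect N \<mu> (\<lambda>\<sigma>. f \<sigma> ^ p)
    \<le> fact p / s ^ p * (expect N \<mu> (\<lambda>\<sigma>. exp (s * f \<sigma>)) + expect N \<mu> (\<lambda>\<sigma>. exp (- s * f \<sigma>)))"
proof -
  have "expect N \<mu> (\<lambda>\<sigma>. f \<sigma> ^ p)
      \<le> expect N \<mu> (\<lambda>\<sigma>. fact p / s ^ p * (exp (s * f \<sigma>) + exp (- s * f \<sigma>)))"
  proof (rule expect_mono[OF \<mu>])
    fix \<sigma>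
    have "f \<sigma> ^ p \<le> \<bar>f \<sigma>\<bar> ^ p"
      by (simp flip: power_abs)
    also have "\<dots> \<le> fact p / s ^ p * (exp (s * f \<sigma>) + exp (- s * f \<sigma>))"
      by (rule abs_power_le_exp[OF \<open>0 < s\<close>])
    finally show "f \<sigma> ^ p \<le> fact p / s ^ p * (exp (s * f \<sigma>) + exp (- s * f \<sigma>))" .
  qed
  then show ?thesis
    by (simp only: expect_cmult expect_add)
qed

section \<open>Griffiths and Ginibre inequalities\<close>

lemma ising_weight_pos: "0 < ising_weight N J \<sigma>"
  by (simp add: ising_weight_def)

lemma ising_partition_pos: "0 < (\<Sum>\<sigma>\<in>Omega N. ising_weight N J \<sigma>)"
proof (rule sum_pos)
  have "(\<lambda>i. if i < N then 1 else 0) \<in> Omega N" by (simp add: Omega_def)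
  then show "Omega N \<noteq> {}" by blast
qed (simp_all add: ising_weight_pos)

lemma is_distribution_ising: "is_distribution N (ising N J)"
  using ising_partition_pos[of N J]
  by (auto simp: is_distribution_def ising_def ising_weight_pos less_imp_le simp flip: sum_divide_distrib)

lemma expect_ising:
  "expect N (ising N J) f = (\<Sum>\<sigma>\<in>Omega N. ising_weight N J \<sigma> * f \<sigma>) / (\<Sum>\<sigma>\<in>Omega N. ising_weight N J \<sigma>)"
  by (simp add: expect_def ising_def sum_divide_distrib)

inductive monomial_cone :: "(spin \<Rightarrow> real) \<Rightarrow> bool" where
  monomial: "0 \<le> c \<Longrightarrow> monomial_cone (\<lambda>\<sigma>. c * spin_monomial xs \<sigma>)"
| add: "monomial_cone f \<Longrightarrow> monomial_cone g \<Longrightarrow> monomial_cone (\<lambda>\<sigma>. f \<sigma> + g \<sigma>)"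

lemma monomial_cone_mult:
  assumes "monomial_cone f" and "monomial_cone g"
  shows "monomial_cone (\<lambda>\<sigma>. f \<sigma> * g \<sigma>)"
  using assms
proof (induction f rule: monomial_cone.induct)
  case (monomial c xs)
  from monomial.prems monomial.hyps show ?case
  proof (induction g rule: monomial_cone.induct)
    case (monomial d ys)
    then show ?case
      using monomial_cone.monomial[of "c * d" "xs @ ys"] by (simp add: spin_monomial_append ac_simps)
  next
    case (add g1 g2)
    then show ?case using monomial_cone.add by (simp add: distrib_left)
  qed
next
  case (add f1 f2)
  then show ?case using monomial_cone.add by (simp add: distrib_right)
qed

lemma monomial_cone_prod:
  "finite A \<Longrightarrow> (\<And>x. x \<in> A \<Longrightarrow> monomial_cone (g x)) \<Longrightarrow> monomial_cone (\<lambda>\<sigma>. \<Prod>x\<in>A. g x \<sigma>)"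
proof (induction A rule: finite_induct)
  case empty
  then show ?case using monomial_cone.monomial[of 1 "[]"] by simp
qed (simp add: monomial_cone_mult)

lemma sum_monomial_cone_nonneg: "monomial_cone f \<Longrightarrow> 0 \<le> (\<Sum>\<sigma>\<in>Omega N. f \<sigma>)"
  by (induction f rule: monomial_cone.induct)
     (simp_all add: sum.distrib sum_spin_monomial_nonneg flip: sum_distrib_left)

text \<open>On spins \<open>s = \<plusminus>1\<close> one has \<open>exp (K s) = cosh K + s sinh K\<close>, so for ferromagnetic
  couplings the Boltzmann weight is a polynomial in the spins with nonnegative coefficients.\<close>

lemma ising_weight_eq_prod:
  assumes "\<sigma> \<in> Omega N"
  shows "ising_weight N K \<sigma> = (\<Prod>i<N. \<Prod>j<N. cosh (K i j) + sinh (K i j) * spin_monomial [i, j] \<sigma>)"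
proof -
  have "exp (K i j * \<sigma> i * \<sigma> j) = cosh (K i j) + sinh (K i j) * spin_monomial [i, j] \<sigma>"
    if "i < N" "j < N" for i j
    using Omega_spin[OF assms that(1)] Omega_spin[OF assms that(2)]
    by (auto simp flip: cosh_plus_sinh cosh_minus_sinh)
  then show ?thesis
    by (simp add: ising_weight_def exp_sum)
qed

theorem griffiths_inequality:
  assumes "\<And>i j. 0 \<le> K i j"
  shows "0 \<le> (\<Sum>\<sigma>\<in>Omega N. ising_weight N K \<sigma> * spin_monomial xs \<sigma>)"
proof -
  have "monomial_cone (\<lambda>\<sigma>. cosh (K i j) + sinh (K i j) * spin_monomial [i, j] \<sigma>)" for i j
    using monomial_cone.add[OF monomial_cone.monomial[of "cosh (K i j)" "[]"]
        monomial_cone.monomial[of "sinh (K i j)" "[i, j]"]] assms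
    by simp
  then have "monomial_cone (\<lambda>\<sigma>. (\<Prod>i<N. \<Prod>j<N. cosh (K i j) + sinh (K i j) * spin_monomial [i, j] \<sigma>)
      * spin_monomial xs \<sigma>)"
    using monomial_cone.monomial[of 1 xs]
    by (intro monomial_cone_mult monomial_cone_prod) simp_all
  then show ?thesis
    using sum_monomial_cone_nonneg by (simp add: ising_weight_eq_prod cong: sum.cong)
qed

lemma sum_product_diff:
  fixes u v f g :: "'a \<Rightarrow> real"
  shows "(\<Sum>x\<in>A. \<Sum>y\<in>A. u x * v y * (f x - s * g y))
    = (\<Sum>x\<in>A. u x * f x) * (\<Sum>y\<in>A. v y) - s * ((\<Sum>x\<in>A. u x) * (\<Sum>y\<in>A. v y * g y))"
  unfolding sum_product by (simp add: sum_subtractf sum_distrib_left algebra_simps)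

lemma ising_weight_times:
  "ising_weight N J \<sigma> * ising_weight N K (spin_times \<sigma> t) = ising_weight N (\<lambda>i j. J i j + K i j * t i * t j) \<sigma>"
  by (simp add: ising_weight_def spin_times_def sum.distrib algebra_simps flip: exp_add)

text \<open>Ginibre's duplication trick: substituting \<open>\<tau> = \<sigma> t\<close> in the second copy turns the
  double sum into a nonnegative combination of correlations at couplings
  \<open>\<bar>J i j\<bar> + J i j t\<^sub>i t\<^sub>j \<ge> 0\<close>, to which Griffiths' inequality applies.\<close>

lemma ginibre_duplicate:
  assumes "\<bar>s\<bar> \<le> 1"
  shows "0 \<le> (\<Sum>\<sigma>\<in>Omega N. \<Sum>\<tau>\<in>Omega N. ising_weight N (\<lambda>i j. \<bar>J i j\<bar>) \<sigma> * ising_weight N J \<tau>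
                * (spin_monomial xs \<sigma> - s * spin_monomial xs \<tau>))"
proof -
  let ?w = "ising_weight N J" and ?w' = "ising_weight N (\<lambda>i j. \<bar>J i j\<bar>)" and ?m = "spin_monomial xs"
  let ?K = "\<lambda>t i j. \<bar>J i j\<bar> + J i j * t i * t j"
  have "(\<Sum>\<tau>\<in>Omega N. ?w' \<sigma> * ?w \<tau> * (?m \<sigma> - s * ?m \<tau>))
      = (\<Sum>t\<in>Omega N. (1 - s * ?m t) * (ising_weight N (?K t) \<sigma> * ?m \<sigma>))"
    if "\<sigma> \<in> Omega N" for \<sigma>
  proof -
    have "(\<Sum>\<tau>\<in>Omega N. ?w' \<sigma> * ?w \<tau> * (?m \<sigma> - s * ?m \<tau>))
      = (\<Sum>t\<in>Omega N. ?w' \<sigma> * ?w (spin_times \<sigma> t) * (?m \<sigma> - s * ?m (spin_times \<sigma> t)))"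
      using that by (intro sum_involution) (simp_all add: spin_times_Omega spin_times_cancel)
    then show ?thesis
      by (simp only: ising_weight_times spin_monomial_times) (simp add: algebra_simps)
  qed
  then have "(\<Sum>\<sigma>\<in>Omega N. \<Sum>\<tau>\<in>Omega N. ?w' \<sigma> * ?w \<tau> * (?m \<sigma> - s * ?m \<tau>))
      = (\<Sum>t\<in>Omega N. (1 - s * ?m t) * (\<Sum>\<sigma>\<in>Omega N. ising_weight N (?K t) \<sigma> * ?m \<sigma>))"
    by (simp add: sum_distrib_left cong: sum.cong) (rule sum.swap)
  also have "\<dots> \<ge> 0"
  proof (rule sum_nonneg, rule mult_nonneg_nonneg)
    fix t assume t: "t \<in> Omega N"
    have "\<bar>s * ?m t\<bar> \<le> 1"
      using abs_spin_monomial_le_1[OF t] assms by (simp add: abs_mult mult_le_one)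
    then show "0 \<le> 1 - s * ?m t" by simp
    have "0 \<le> ?K t i j" for i j
    proof -
      have "\<bar>t i * t j\<bar> \<le> 1"
        using abs_Omega_le_1[OF t, of i] abs_Omega_le_1[OF t, of j] by (simp add: abs_mult mult_le_one)
      then have "\<bar>J i j * t i * t j\<bar> \<le> \<bar>J i j\<bar>"
        by (simp add: abs_mult mult.assoc mult_left_le)
      then show ?thesis by (simp add: abs_le_iff)
    qed
    then show "0 \<le> (\<Sum>\<sigma>\<in>Omega N. ising_weight N (?K t) \<sigma> * ?m \<sigma>)"
      by (rule griffiths_inequality)
  qed
  finally show ?thesis .
qed

theorem ginibre_inequality:
  "\<bar>expect N (ising N J) (spin_monomial xs)\<bar> \<le> expect N (ising N (\<lambda>i j. \<bar>J i j\<bar>)) (spin_monomial xs)"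
proof -
  define Z where "Z = (\<Sum>\<sigma>\<in>Omega N. ising_weight N J \<sigma>)"
  define A where "A = (\<Sum>\<sigma>\<in>Omega N. ising_weight N J \<sigma> * spin_monomial xs \<sigma>)"
  define Z' where "Z' = (\<Sum>\<sigma>\<in>Omega N. ising_weight N (\<lambda>i j. \<bar>J i j\<bar>) \<sigma>)"
  define A' where "A' = (\<Sum>\<sigma>\<in>Omega N. ising_weight N (\<lambda>i j. \<bar>J i j\<bar>) \<sigma> * spin_monomial xs \<sigma>)"
  have "0 \<le> A' * Z - s * (Z' * A)" if "\<bar>s\<bar> \<le> 1" for s
    using ginibre_duplicate[OF that, of N J xs]
    unfolding A_def A'_def Z_def Z'_def sum_product_diff .
  from this[of 1] this[of "-1"] have "\<bar>Z' * A\<bar> \<le> A' * Z"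
    by (intro abs_leI) simp_all
  moreover have "0 < Z" "0 < Z'"
    unfolding Z_def Z'_def by (simp_all add: ising_partition_pos)
  ultimately have "\<bar>A / Z\<bar> \<le> A' / Z'"
    by (simp add: abs_mult divide_le_eq le_divide_eq mult.commute)
  then show ?thesis
    by (simp only: expect_ising A_def A'_def Z_def Z'_def)
qed

section \<open>Lipschitz functions and the Wasserstein distance\<close>

lemma ham_nonneg: "0 \<le> ham N x y"
  by (simp add: ham_def)

lemma ham_commute: "ham N x y = ham N y x"
  unfolding ham_def by (metis)

lemma ham_le: "ham N x y \<le> real N"
proof -
  have "card {i. i < N \<and> x i \<noteq> y i} \<le> card {..<N}"
    by (rule card_mono) auto
  then show ?thesis by (simp add: ham_def)
qed

definition nbr_lipschitz :: "nat \<Rightarrow> (spin \<Rightarrow> real) \<Rightarrow> real \<Rightarrow> bool" where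
  "nbr_lipschitz N f L \<longleftrightarrow> (\<forall>x\<in>Omega N. \<forall>y\<in>Omega N. ham N x y = 1 \<longrightarrow> \<bar>f x - f y\<bar> \<le> L)"

lemma nbr_lipschitz_ham:
  assumes f: "nbr_lipschitz N f L" and "x \<in> Omega N" and y: "y \<in> Omega N"
  shows "\<bar>f x - f y\<bar> \<le> L * ham N x y"
  using \<open>x \<in> Omega N\<close>
proof (induction "card {i. i < N \<and> x i \<noteq> y i}" arbitrary: x)
  case 0
  then have "x i = y i" for i
    using y by (cases "i < N") (auto simp: Omega_outside)
  then show ?case
    by (simp add: fun_eq_iff ham_def)
next
  case (Suc n x)
  then obtain i where i: "i < N" "x i \<noteq> y i"
    by (metis (mono_tags, lifting) card.empty empty_Collect_eq nat.distinct(1))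
  define x' where "x' = x(i := y i)"
  have x': "x' \<in> Omega N"
    using Suc.prems y i by (auto simp: x'_def Omega_def)
  have "{j. j < N \<and> x' j \<noteq> y j} = {j. j < N \<and> x j \<noteq> y j} - {i}"
    by (auto simp: x'_def)
  then have n: "n = card {j. j < N \<and> x' j \<noteq> y j}"
    using Suc.hyps(2) i by simp
  have "{j. j < N \<and> x j \<noteq> x' j} = {i}"
    using i by (auto simp: x'_def)
  then have "\<bar>f x - f x'\<bar> \<le> L"
    using f Suc.prems x' by (simp add: nbr_lipschitz_def ham_def)
  moreover have "\<bar>f x' - f y\<bar> \<le> L * ham N x' y"
    by (rule Suc.hyps(1)[OF n x'])
  moreover have "ham N x y = 1 + ham N x' y"
    using Suc.hyps(2) n by (simp add: ham_def)
  ultimately show ?case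
    by (simp add: distrib_left abs_triangle_ineq[THEN order_trans])
qed

lemma is_coupling_product:
  assumes \<mu>: "is_distribution N \<mu>" and \<nu>: "is_distribution N \<nu>"
  shows "is_coupling N \<mu> \<nu> (\<lambda>(x, y). if x \<in> Omega N \<and> y \<in> Omega N then \<mu> x * \<nu> y else 0)"
  using assms unfolding is_coupling_def is_distribution_def
  by (auto simp: sum_distrib_left[symmetric] sum_distrib_right[symmetric] cong: sum.cong)

lemma abs_expect_diff_le_coupling:
  assumes q: "is_coupling N \<mu> \<nu> q" and f: "nbr_lipschitz N f L" and "0 \<le> L"
  shows "\<bar>expect N \<mu> f - expect N \<nu> f\<bar> \<le> L * (\<Sum>z\<in>Omega N \<times> Omega N. q z * ham N (fst z) (snd z))"
proof -
  have marginals: "\<And>x. x \<in> Omega N \<Longrightarrow> (\<Sum>y\<in>Omega N. q (x, y)) = \<mu> x"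
      "\<And>y. y \<in> Omega N \<Longrightarrow> (\<Sum>x\<in>Omega N. q (x, y)) = \<nu> y"
    using q by (simp_all add: is_coupling_def)
  have "expect N \<mu> f = (\<Sum>x\<in>Omega N. \<Sum>y\<in>Omega N. q (x, y) * f x)"
    unfolding expect_def by (rule sum.cong) (simp_all add: marginals flip: sum_distrib_right)
  moreover have "expect N \<nu> f = (\<Sum>x\<in>Omega N. \<Sum>y\<in>Omega N. q (x, y) * f y)"
    unfolding expect_def by (subst sum.swap, rule sum.cong) (simp_all add: marginals flip: sum_distrib_right)
  ultimately have "expect N \<mu> f - expect N \<nu> f = (\<Sum>z\<in>Omega N \<times> Omega N. q z * (f (fst z) - f (snd z)))"
    by (simp add: sum.cartesian_product case_prod_beta right_diff_distrib sum_subtractf)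
  also have "\<bar>\<dots>\<bar> \<le> (\<Sum>z\<in>Omega N \<times> Omega N. L * (q z * ham N (fst z) (snd z)))"
  proof (rule order_trans[OF sum_abs sum_mono])
    fix z assume "z \<in> Omega N \<times> Omega N"
    then have "\<bar>f (fst z) - f (snd z)\<bar> \<le> L * ham N (fst z) (snd z)"
      using nbr_lipschitz_ham[OF f] by auto
    moreover have "0 \<le> q z"
      using q by (cases z) (simp add: is_coupling_def)
    ultimately show "\<bar>q z * (f (fst z) - f (snd z))\<bar> \<le> L * (q z * ham N (fst z) (snd z))"
      by (metis abs_mult abs_of_nonneg mult.left_commute mult_left_mono)
  qed
  finally show ?thesis
    by (simp add: sum_distrib_left)
qed

lemma W1_nonneg:
  assumes "is_distribution N \<mu>" and "is_distribution N \<nu>"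
  shows "0 \<le> W1 N \<mu> \<nu>"
  unfolding W1_def
proof (rule cInf_greatest)
  show "{\<Sum>z\<in>Omega N \<times> Omega N. q z * ham N (fst z) (snd z) | q. is_coupling N \<mu> \<nu> q} \<noteq> {}"
    using is_coupling_product[OF assms] by blast
qed (auto simp: is_coupling_def ham_nonneg intro!: sum_nonneg)

lemma abs_expect_diff_le_W1:
  assumes \<mu>: "is_distribution N \<mu>" and \<nu>: "is_distribution N \<nu>"
    and f: "nbr_lipschitz N f L" and "0 \<le> L"
  shows "\<bar>expect N \<mu> f - expect N \<nu> f\<bar> \<le> L * W1 N \<mu> \<nu>"
proof -
  let ?costs = "{\<Sum>z\<in>Omega N \<times> Omega N. q z * ham N (fst z) (snd z) | q. is_coupling N \<mu> \<nu> q}"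
  have costs: "?costs \<noteq> {}"
    using is_coupling_product[OF \<mu> \<nu>] by blast
  have bound: "\<bar>expect N \<mu> f - expect N \<nu> f\<bar> \<le> L * c" if "c \<in> ?costs" for c
    using that abs_expect_diff_le_coupling[OF _ f \<open>0 \<le> L\<close>] by blast
  show ?thesis
  proof (cases "L = 0")
    case True
    then show ?thesis using bound costs by fastforce
  next
    case False
    with \<open>0 \<le> L\<close> have "\<bar>expect N \<mu> f - expect N \<nu> f\<bar> / L \<le> W1 N \<mu> \<nu>"
      unfolding W1_def using bound by (intro cInf_greatest[OF costs]) (simp add: divide_le_eq mult.commute)
    with False \<open>0 \<le> L\<close> show ?thesis
      by (simp add: divide_le_eq mult.commute)
  qed
qed

section \<open>Concentration for contracting single-site chains\<close>

definition markov_op :: "nat \<Rightarrow> (spin \<Rightarrow> spin \<Rightarrow> real) \<Rightarrow> (spin \<Rightarrow> real) \<Rightarrow> spin \<Rightarrow> real" where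
  "markov_op N P f \<sigma> = expect N (P \<sigma>) f"

lemma single_site_chain_distribution:
  "single_site_chain N \<mu> P \<Longrightarrow> \<sigma> \<in> Omega N \<Longrightarrow> is_distribution N (P \<sigma>)"
  by (simp add: single_site_chain_def is_distribution_def)

lemma expect_markov_op:
  assumes "single_site_chain N \<mu> P"
  shows "expect N \<mu> (markov_op N P f) = expect N \<mu> f"
proof -
  have "expect N \<mu> (markov_op N P f) = (\<Sum>\<tau>\<in>Omega N. (\<Sum>\<sigma>\<in>Omega N. \<mu> \<sigma> * P \<sigma> \<tau>) * f \<tau>)"
    unfolding expect_def markov_op_def
    by (simp add: sum_distrib_left sum_distrib_right mult.assoc) (rule sum.swap)
  also have "\<dots> = expect N \<mu> f"
    using assms by (simp add: expect_def single_site_chain_def)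
  finally show ?thesis .
qed

lemma markov_op_exp_le:
  assumes chain: "single_site_chain N \<mu> P" and f: "nbr_lipschitz N f L" "0 \<le> L"
    and s: "\<bar>s\<bar> * (2 * L) \<le> 1" and \<sigma>: "\<sigma> \<in> Omega N"
  shows "markov_op N P (\<lambda>\<tau>. exp (s * f \<tau>)) \<sigma> \<le> exp (4 * s\<^sup>2 * L\<^sup>2) * exp (s * markov_op N P f \<sigma>)"
proof -
  have P: "is_distribution N (P \<sigma>)"
    using chain \<sigma> by (rule single_site_chain_distribution)
  have near: "\<bar>f \<tau> - f \<sigma>\<bar> \<le> L" if "\<tau> \<in> Omega N" "P \<sigma> \<tau> \<noteq> 0" for \<tau>
  proof -
    have "ham N \<tau> \<sigma> \<le> 1"
      using chain \<sigma> that by (simp add: single_site_chain_def ham_commute)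
    then have "L * ham N \<tau> \<sigma> \<le> L"
      using f(2) by (simp add: mult_left_le)
    then show ?thesis
      using nbr_lipschitz_ham[OF f(1) that(1) \<sigma>] by linarith
  qed
  have mean: "\<bar>expect N (P \<sigma>) f - f \<sigma>\<bar> \<le> L"
    by (rule abs_expect_diff_le[OF P near])
  have "expect N (P \<sigma>) (\<lambda>\<tau>. exp (s * f \<tau>)) \<le> exp ((\<bar>s\<bar> * (2 * L))\<^sup>2) * exp (s * expect N (P \<sigma>) f)"
  proof (rule expect_exp_le[OF P s])
    fix \<tau> assume "\<tau> \<in> Omega N" "P \<sigma> \<tau> \<noteq> 0"
    then have "\<bar>f \<tau> - expect N (P \<sigma>) f\<bar> \<le> 2 * L"
      using near mean unfolding abs_le_iff by fastforce
    then show "\<bar>s * (f \<tau> - expect N (P \<sigma>) f)\<bar> \<le> \<bar>s\<bar> * (2 * L)"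
      by (simp add: abs_mult mult_left_mono)
  qed
  then show ?thesis
    by (simp add: markov_op_def power_mult_distrib mult_ac)
qed

lemma expect_exp_le_markov_op:
  assumes \<mu>: "is_distribution N \<mu>" and chain: "single_site_chain N \<mu> P"
    and f: "nbr_lipschitz N f L" "0 \<le> L" and s: "\<bar>s\<bar> * (2 * L) \<le> 1"
  shows "expect N \<mu> (\<lambda>\<sigma>. exp (s * f \<sigma>))
    \<le> exp (4 * s\<^sup>2 * L\<^sup>2) * expect N \<mu> (\<lambda>\<sigma>. exp (s * markov_op N P f \<sigma>))"
proof -
  have "expect N \<mu> (\<lambda>\<sigma>. exp (s * f \<sigma>)) = expect N \<mu> (markov_op N P (\<lambda>\<sigma>. exp (s * f \<sigma>)))"
    by (rule expect_markov_op[OF chain, symmetric])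
  also have "\<dots> \<le> expect N \<mu> (\<lambda>\<sigma>. exp (4 * s\<^sup>2 * L\<^sup>2) * exp (s * markov_op N P f \<sigma>))"
    by (rule expect_mono[OF \<mu> markov_op_exp_le[OF chain f s]])
  also have "\<dots> = exp (4 * s\<^sup>2 * L\<^sup>2) * expect N \<mu> (\<lambda>\<sigma>. exp (s * markov_op N P f \<sigma>))"
    by (rule expect_cmult)
  finally show ?thesis .
qed

lemma sum_power2_powers_le:
  fixes \<theta> :: real
  assumes "0 \<le> \<theta>" and "\<theta> < 1"
  shows "(\<Sum>t<T. (\<theta> ^ t)\<^sup>2) \<le> 1 / (1 - \<theta>\<^sup>2)"
proof -
  have "\<theta>\<^sup>2 < 1"
    using assms by (simp add: power_less_one_iff)
  then have "(\<Sum>t<T. (\<theta>\<^sup>2) ^ t) \<le> 1 / (1 - \<theta>\<^sup>2)"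
    by (simp add: sum_gp_strict divide_right_mono)
  then show ?thesis
    by (simp add: mult.commute flip: power_mult)
qed

locale contracting_chain =
  fixes N :: nat and \<mu> :: "spin \<Rightarrow> real" and P :: "spin \<Rightarrow> spin \<Rightarrow> real" and \<theta> :: real
  assumes distribution: "is_distribution N \<mu>"
    and chain: "single_site_chain N \<mu> P"
    and contraction: "\<And>\<sigma> \<sigma>'. \<sigma> \<in> Omega N \<Longrightarrow> \<sigma>' \<in> Omega N \<Longrightarrow> ham N \<sigma> \<sigma>' = 1 \<Longrightarrow> W1 N (P \<sigma>) (P \<sigma>') \<le> \<theta>"
    and theta_nonneg: "0 \<le> \<theta>" and theta_less_1: "\<theta> < 1"
begin

lemma nbr_lipschitz_markov_op:
  assumes f: "nbr_lipschitz N f L" "0 \<le> L"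
  shows "nbr_lipschitz N (markov_op N P f) (\<theta> * L)"
  unfolding nbr_lipschitz_def
proof (intro ballI impI)
  fix \<sigma> \<sigma>' assume \<sigma>: "\<sigma> \<in> Omega N" and \<sigma>': "\<sigma>' \<in> Omega N" and "ham N \<sigma> \<sigma>' = 1"
  have "\<bar>markov_op N P f \<sigma> - markov_op N P f \<sigma>'\<bar> \<le> L * W1 N (P \<sigma>) (P \<sigma>')"
    unfolding markov_op_def
    using single_site_chain_distribution[OF chain] \<sigma> \<sigma>' f by (intro abs_expect_diff_le_W1)
  also have "\<dots> \<le> L * \<theta>"
    using contraction[OF \<sigma> \<sigma>' \<open>ham N \<sigma> \<sigma>' = 1\<close>] f(2) by (rule mult_left_mono)
  finally show "\<bar>markov_op N P f \<sigma> - markov_op N P f \<sigma>'\<bar> \<le> \<theta> * L"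
    by (simp add: mult.commute)
qed

lemma nbr_lipschitz_markov_iter:
  assumes "nbr_lipschitz N f L" "0 \<le> L"
  shows "nbr_lipschitz N ((markov_op N P ^^ T) f) (\<theta> ^ T * L)"
proof (induction T)
  case (Suc T)
  then show ?case
    using nbr_lipschitz_markov_op[OF Suc] assms theta_nonneg by (simp add: mult.assoc)
qed (simp add: assms)

lemma expect_markov_iter: "expect N \<mu> ((markov_op N P ^^ T) f) = expect N \<mu> f"
  by (induction T) (simp_all add: expect_markov_op[OF chain])

lemma markov_iter_deviation:
  assumes f: "nbr_lipschitz N f L" "0 \<le> L" and x: "x \<in> Omega N"
  shows "\<bar>(markov_op N P ^^ T) f x - expect N \<mu> f\<bar> \<le> \<theta> ^ T * L * real N"
proof -
  let ?g = "(markov_op N P ^^ T) f"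
  have "\<bar>expect N \<mu> ?g - ?g x\<bar> \<le> \<theta> ^ T * L * real N"
  proof (rule abs_expect_diff_le[OF distribution])
    fix y assume y: "y \<in> Omega N"
    have "\<bar>?g y - ?g x\<bar> \<le> \<theta> ^ T * L * ham N y x"
      by (rule nbr_lipschitz_ham[OF nbr_lipschitz_markov_iter[OF f] y x])
    also have "\<dots> \<le> \<theta> ^ T * L * real N"
      using theta_nonneg f(2) by (intro mult_left_mono ham_le) simp
    finally show "\<bar>?g y - ?g x\<bar> \<le> \<theta> ^ T * L * real N" .
  qed
  then show ?thesis
    by (simp add: expect_markov_iter abs_minus_commute)
qed

lemma expect_exp_le_markov_iter:
  assumes f: "nbr_lipschitz N f L" "0 \<le> L" and s: "\<bar>s\<bar> * (2 * L) \<le> 1"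
  shows "expect N \<mu> (\<lambda>\<sigma>. exp (s * f \<sigma>))
    \<le> exp (4 * s\<^sup>2 * L\<^sup>2 * (\<Sum>t<T. (\<theta> ^ t)\<^sup>2)) * expect N \<mu> (\<lambda>\<sigma>. exp (s * (markov_op N P ^^ T) f \<sigma>))"
proof (induction T)
  case (Suc T)
  let ?g = "(markov_op N P ^^ T) f"
  have "\<theta> ^ T * L \<le> L"
    using theta_nonneg theta_less_1 f(2) by (simp add: mult_left_le_one_le power_le_one)
  then have "\<bar>s\<bar> * (2 * (\<theta> ^ T * L)) \<le> 1"
    using s by (smt (verit) abs_ge_zero mult_left_mono)
  then have "expect N \<mu> (\<lambda>\<sigma>. exp (s * ?g \<sigma>))
      \<le> exp (4 * s\<^sup>2 * (\<theta> ^ T * L)\<^sup>2) * expect N \<mu> (\<lambda>\<sigma>. exp (s * markov_op N P ?g \<sigma>))"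
    using theta_nonneg f(2)
    by (intro expect_exp_le_markov_op[OF distribution chain nbr_lipschitz_markov_iter[OF f]]) simp_all
  with Suc.IH have "expect N \<mu> (\<lambda>\<sigma>. exp (s * f \<sigma>))
      \<le> exp (4 * s\<^sup>2 * L\<^sup>2 * (\<Sum>t<T. (\<theta> ^ t)\<^sup>2)) * (exp (4 * s\<^sup>2 * (\<theta> ^ T * L)\<^sup>2)
          * expect N \<mu> (\<lambda>\<sigma>. exp (s * markov_op N P ?g \<sigma>)))"
    by (rule order_trans[OF _ mult_left_mono]) simp
  then show ?case
    by (simp add: algebra_simps flip: exp_add)
qed simp

theorem expect_exp_concentration:
  assumes f: "nbr_lipschitz N f L" "0 \<le> L" and s: "\<bar>s\<bar> * (2 * L) \<le> 1"
  shows "expect N \<mu> (\<lambda>\<sigma>. exp (s * f \<sigma>)) \<le> exp (4 * s\<^sup>2 * L\<^sup>2 / (1 - \<theta>\<^sup>2)) * exp (s * expect N \<mu> f)"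
proof -
  txt \<open>Each horizon \<open>T\<close> gives the bound \<open>B T\<close>; its deviation term vanishes as \<open>\<theta>\<^sup>T \<rightarrow> 0\<close>.\<close>
  define B where "B T = exp (4 * s\<^sup>2 * L\<^sup>2 / (1 - \<theta>\<^sup>2)) * exp (s * expect N \<mu> f + \<bar>s\<bar> * (\<theta> ^ T * L * real N))"
    for T
  have bound: "expect N \<mu> (\<lambda>\<sigma>. exp (s * f \<sigma>)) \<le> B T" for T
  proof -
    let ?g = "(markov_op N P ^^ T) f"
    have "4 * s\<^sup>2 * L\<^sup>2 * (\<Sum>t<T. (\<theta> ^ t)\<^sup>2) \<le> 4 * s\<^sup>2 * L\<^sup>2 * (1 / (1 - \<theta>\<^sup>2))"
      using sum_power2_powers_le[OF theta_nonneg theta_less_1] by (intro mult_left_mono) simp_all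
    then have A: "exp (4 * s\<^sup>2 * L\<^sup>2 * (\<Sum>t<T. (\<theta> ^ t)\<^sup>2)) \<le> exp (4 * s\<^sup>2 * L\<^sup>2 / (1 - \<theta>\<^sup>2))"
      by simp
    have "expect N \<mu> (\<lambda>\<sigma>. exp (s * ?g \<sigma>))
        \<le> expect N \<mu> (\<lambda>_. exp (s * expect N \<mu> f + \<bar>s\<bar> * (\<theta> ^ T * L * real N)))"
    proof (rule expect_mono[OF distribution])
      fix \<sigma> assume "\<sigma> \<in> Omega N"
      then have "\<bar>?g \<sigma> - expect N \<mu> f\<bar> \<le> \<theta> ^ T * L * real N"
        by (rule markov_iter_deviation[OF f])
      then have "\<bar>s\<bar> * \<bar>?g \<sigma> - expect N \<mu> f\<bar> \<le> \<bar>s\<bar> * (\<theta> ^ T * L * real N)"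
        by (rule mult_left_mono) simp
      then have "s * (?g \<sigma> - expect N \<mu> f) \<le> \<bar>s\<bar> * (\<theta> ^ T * L * real N)"
        using abs_ge_self[of "s * (?g \<sigma> - expect N \<mu> f)"] by (simp add: abs_mult)
      then show "exp (s * ?g \<sigma>) \<le> exp (s * expect N \<mu> f + \<bar>s\<bar> * (\<theta> ^ T * L * real N))"
        by (simp add: right_diff_distrib)
    qed
    then have E: "expect N \<mu> (\<lambda>\<sigma>. exp (s * ?g \<sigma>)) \<le> exp (s * expect N \<mu> f + \<bar>s\<bar> * (\<theta> ^ T * L * real N))"
      by (simp add: expect_const[OF distribution])
    show ?thesis
      unfolding B_def
      by (rule order_trans[OF expect_exp_le_markov_iter[OF f s] mult_mono[OF A E]])
         (simp_all add: expect_nonneg[OF distribution])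
  qed
  have "B \<longlonglongrightarrow> exp (4 * s\<^sup>2 * L\<^sup>2 / (1 - \<theta>\<^sup>2)) * exp (s * expect N \<mu> f + \<bar>s\<bar> * (0 * L * real N))"
    unfolding B_def using theta_nonneg theta_less_1 by (intro tendsto_intros LIMSEQ_power_zero) simp
  then have "expect N \<mu> (\<lambda>\<sigma>. exp (s * f \<sigma>))
      \<le> exp (4 * s\<^sup>2 * L\<^sup>2 / (1 - \<theta>\<^sup>2)) * exp (s * expect N \<mu> f + \<bar>s\<bar> * (0 * L * real N))"
    by (rule LIMSEQ_le_const) (use bound in blast)
  then show ?thesis
    by simp
qed

end

section \<open>The magnetization of the Ising model\<close>

definition magnetization :: "nat \<Rightarrow> spin \<Rightarrow> real" where
  "magnetization N \<sigma> = (\<Sum>i<N. \<sigma> i)"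

lemma expect_ising_magnetization: "expect N (ising N K) (magnetization N) = 0"
proof -
  have "expect N (ising N K) (magnetization N)
      = (\<Sum>\<sigma>\<in>Omega N. ising N K (\<lambda>i. - \<sigma> i) * magnetization N (\<lambda>i. - \<sigma> i))"
    unfolding expect_def by (rule sum_involution) (auto simp: Omega_def)
  also have "\<dots> = - expect N (ising N K) (magnetization N)"
    by (simp add: expect_def ising_def ising_weight_def magnetization_def sum_negf)
  finally show ?thesis by simp
qed

lemma nbr_lipschitz_magnetization: "nbr_lipschitz N (magnetization N) 2"
  unfolding nbr_lipschitz_def
proof (intro ballI impI)
  fix x y assume x: "x \<in> Omega N" and y: "y \<in> Omega N" and "ham N x y = 1"
  let ?D = "{i. i < N \<and> x i \<noteq> y i}"
  have "\<bar>magnetization N x - magnetization N y\<bar> \<le> (\<Sum>i<N. \<bar>x i - y i\<bar>)"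
    unfolding magnetization_def by (simp flip: sum_subtractf)
  also have "\<dots> = (\<Sum>i\<in>?D. \<bar>x i - y i\<bar>)"
    by (rule sum.mono_neutral_right) auto
  also have "\<dots> \<le> (\<Sum>i\<in>?D. 2)"
  proof (rule sum_mono)
    fix i
    show "\<bar>x i - y i\<bar> \<le> 2"
      using abs_Omega_le_1[OF x, of i] abs_Omega_le_1[OF y, of i] by linarith
  qed
  also have "\<dots> = 2 * ham N x y"
    by (simp add: ham_def)
  finally show "\<bar>magnetization N x - magnetization N y\<bar> \<le> 2"
    using \<open>ham N x y = 1\<close> by simp
qed

lemma contracting_chain_ising:
  assumes "contracting N K \<theta>" and "0 < N"
  obtains P where "contracting_chain N (ising N K) P \<theta>"
proof -
  obtain P where chain: "single_site_chain N (ising N K) P" and "\<theta> < 1"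
    and contr: "\<forall>\<sigma>\<in>Omega N. \<forall>\<sigma>'\<in>Omega N. ham N \<sigma> \<sigma>' = 1 \<longrightarrow> W1 N (P \<sigma>) (P \<sigma>') \<le> \<theta>"
    using assms(1) by (auto simp: contracting_def)
  define x :: spin where "x = (\<lambda>i. if i < N then 1 else 0)"
  have x: "x \<in> Omega N" and y: "x(0 := -1) \<in> Omega N"
    using \<open>0 < N\<close> by (auto simp: x_def Omega_def)
  have "{i. i < N \<and> x i \<noteq> (x(0 := -1)) i} = {0}"
    using \<open>0 < N\<close> by (auto simp: x_def)
  then have "W1 N (P x) (P (x(0 := -1))) \<le> \<theta>"
    using contr x y by (simp add: ham_def)
  moreover have "0 \<le> W1 N (P x) (P (x(0 := -1)))"
    using single_site_chain_distribution[OF chain] x y by (intro W1_nonneg)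
  ultimately have "0 \<le> \<theta>" by linarith
  with chain contr \<open>\<theta> < 1\<close> show ?thesis
    by (intro that) (unfold_locales; auto simp: is_distribution_ising)
qed

lemma ising_exp_magnetization_le:
  assumes contr: "contracting N K (1 - \<alpha> / real N)" and "0 < \<alpha>" and "0 < N"
    and c: "\<bar>c\<bar> \<le> 1 / (4 * sqrt (real N))"
  shows "expect N (ising N K) (\<lambda>\<sigma>. exp (c * magnetization N \<sigma>)) \<le> exp (1 / \<alpha>)"
proof -
  define \<theta> where "\<theta> = 1 - \<alpha> / real N"
  obtain P where "contracting_chain N (ising N K) P \<theta>"
    using contracting_chain_ising contr \<open>0 < N\<close> unfolding \<theta>_def by blast
  then interpret contracting_chain N "ising N K" P \<theta> .
  have "1 \<le> sqrt (real N)"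
    using \<open>0 < N\<close> by simp
  then have "\<bar>c\<bar> * 4 \<le> \<bar>c\<bar> * (4 * sqrt (real N))"
    by (intro mult_left_mono) simp_all
  also have "\<dots> \<le> 1"
    using c \<open>1 \<le> sqrt (real N)\<close> by (subst (asm) pos_le_divide_eq) simp_all
  finally have "\<bar>c\<bar> * (2 * 2) \<le> 1"
    by simp
  then have "expect N (ising N K) (\<lambda>\<sigma>. exp (c * magnetization N \<sigma>))
      \<le> exp (4 * c\<^sup>2 * 2\<^sup>2 / (1 - \<theta>\<^sup>2)) * exp (c * expect N (ising N K) (magnetization N))"
    by (intro expect_exp_concentration nbr_lipschitz_magnetization) simp_all
  also have "\<dots> = exp (16 * c\<^sup>2 / (1 - \<theta>\<^sup>2))"
    by (simp add: expect_ising_magnetization)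
  also have "16 * c\<^sup>2 / (1 - \<theta>\<^sup>2) \<le> 1 / \<alpha>"
  proof -
    have "\<theta>\<^sup>2 \<le> \<theta>"
      using theta_nonneg theta_less_1 by (simp add: power2_eq_square mult_left_le_one_le)
    then have gap: "\<alpha> / real N \<le> 1 - \<theta>\<^sup>2"
      by (simp add: \<theta>_def)
    have "c\<^sup>2 \<le> (1 / (4 * sqrt (real N)))\<^sup>2"
      using c by (metis abs_ge_zero power2_abs power_mono)
    then have "16 * c\<^sup>2 \<le> 1 / real N"
      using \<open>0 < N\<close> by (simp add: power_divide)
    moreover have "0 < \<alpha> / real N"
      using \<open>0 < \<alpha>\<close> \<open>0 < N\<close> by simp
    ultimately have "16 * c\<^sup>2 / (1 - \<theta>\<^sup>2) \<le> 1 / real N / (\<alpha> / real N)"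
      using gap by (intro frac_le) simp_all
    then show ?thesis
      using \<open>0 < N\<close> by simp
  qed
  finally show ?thesis
    by simp
qed

lemma ising_magnetization_moment:
  assumes "contracting N K (1 - \<alpha> / real N)" and "0 < \<alpha>" and "0 < N"
  shows "expect N (ising N K) (\<lambda>\<sigma>. magnetization N \<sigma> ^ p)
    \<le> 2 * fact p * 4 ^ p * exp (1 / \<alpha>) * real N powr (real p / 2)"
proof -
  define s where "s = 1 / (4 * sqrt (real N))"
  have "0 < s"
    using \<open>0 < N\<close> by (simp add: s_def)
  have "expect N (ising N K) (\<lambda>\<sigma>. magnetization N \<sigma> ^ p)
      \<le> fact p / s ^ p * (expect N (ising N K) (\<lambda>\<sigma>. exp (s * magnetization N \<sigma>))
        + expect N (ising N K) (\<lambda>\<sigma>. exp (- s * magnetization N \<sigma>)))"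
    by (rule expect_power_le_exp_moments[OF is_distribution_ising \<open>0 < s\<close>])
  also have "\<dots> \<le> fact p / s ^ p * (exp (1 / \<alpha>) + exp (1 / \<alpha>))"
    using assms \<open>0 < s\<close>
    by (intro mult_left_mono add_mono ising_exp_magnetization_le) (simp_all add: s_def)
  also have "fact p / s ^ p = fact p * 4 ^ p * sqrt (real N) ^ p"
    by (simp add: s_def power_divide)
  also have "sqrt (real N) ^ p = real N powr (real p / 2)"
    using \<open>0 < N\<close> by (simp add: powr_half_sqrt[symmetric] powr_power)
  finally show ?thesis
    by (simp add: mult_ac)
qed

lemma finite_tuples [simp]: "finite (tuples N p)"
proof -
  have "tuples N p = {xs. set xs \<subseteq> {..<N} \<and> length xs = p}"
    by (auto simp: tuples_def)
  then show ?thesis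
    by (simp add: finite_lists_length_eq)
qed

lemma tuples_Suc: "tuples N (Suc p) = (\<lambda>(i, xs). i # xs) ` ({..<N} \<times> tuples N p)"
  by (auto simp: tuples_def length_Suc_conv)

lemma sum_tuples_spin_monomial: "(\<Sum>xs\<in>tuples N p. spin_monomial xs \<sigma>) = magnetization N \<sigma> ^ p"
proof (induction p)
  case 0
  have "tuples N 0 = {[]}"
    by (auto simp: tuples_def)
  then show ?case by simp
next
  case (Suc p)
  have inj: "inj_on (\<lambda>(i, xs). i # xs) ({..<N} \<times> tuples N p)"
    by (auto simp: inj_on_def)
  have "(\<Sum>xs\<in>tuples N (Suc p). spin_monomial xs \<sigma>) = (\<Sum>i<N. \<Sum>xs\<in>tuples N p. \<sigma> i * spin_monomial xs \<sigma>)"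
    unfolding tuples_Suc by (subst sum.reindex[OF inj]) (simp add: sum.cartesian_product case_prod_beta)
  also have "\<dots> = magnetization N \<sigma> * (\<Sum>xs\<in>tuples N p. spin_monomial xs \<sigma>)"
    by (simp add: magnetization_def sum_product)
  finally show ?case
    using Suc.IH by simp
qed

lemma expect_tensor_poly:
  "expect N \<mu> (tensor_poly N p b) = (\<Sum>xs\<in>tuples N p. b xs * expect N \<mu> (spin_monomial xs))"
proof -
  have "tensor_poly N p b = (\<lambda>\<sigma>. \<Sum>xs\<in>tuples N p. b xs * spin_monomial xs \<sigma>)"
    by (auto simp: fun_eq_iff tensor_poly_def tuples_def spin_monomial_conv_nth intro: sum.cong)
  then show ?thesis
    by (simp add: expect_sum expect_cmult)
qed

lemma abs_expect_tensor_poly_le: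
  "\<bar>expect N (ising N J) (tensor_poly N p b)\<bar>
    \<le> tensor_sup N p b * expect N (ising N (\<lambda>i j. \<bar>J i j\<bar>)) (\<lambda>\<sigma>. magnetization N \<sigma> ^ p)"
proof -
  let ?\<nu> = "ising N (\<lambda>i j. \<bar>J i j\<bar>)"
  have "\<bar>expect N (ising N J) (tensor_poly N p b)\<bar>
      \<le> (\<Sum>xs\<in>tuples N p. \<bar>b xs\<bar> * \<bar>expect N (ising N J) (spin_monomial xs)\<bar>)"
    unfolding expect_tensor_poly by (rule order_trans[OF sum_abs]) (simp add: abs_mult)
  also have "\<dots> \<le> (\<Sum>xs\<in>tuples N p. tensor_sup N p b * expect N ?\<nu> (spin_monomial xs))"
  proof (rule sum_mono)
    fix xs assume "xs \<in> tuples N p"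
    then have "\<bar>b xs\<bar> \<le> tensor_sup N p b"
      by (auto simp: tensor_sup_def)
    moreover have "\<bar>expect N (ising N J) (spin_monomial xs)\<bar> \<le> expect N ?\<nu> (spin_monomial xs)"
      by (rule ginibre_inequality)
    ultimately show "\<bar>b xs\<bar> * \<bar>expect N (ising N J) (spin_monomial xs)\<bar>
        \<le> tensor_sup N p b * expect N ?\<nu> (spin_monomial xs)"
      by (intro mult_mono) auto
  qed
  also have "\<dots> = tensor_sup N p b * expect N ?\<nu> (\<lambda>\<sigma>. magnetization N \<sigma> ^ p)"
    by (simp add: expect_sum sum_distrib_left flip: sum_tuples_spin_monomial)
  finally show ?thesis .
qed

lemma tensor_poly_no_sites:
  assumes "1 \<le> p"
  shows "tensor_poly 0 p b = (\<lambda>_. 0)"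
proof -
  have "tuples 0 p = {}"
    using assms by (auto simp: tuples_def)
  then show ?thesis
    by (simp add: tensor_poly_def fun_eq_iff)
qed

lemma tensor_sup_nonneg:
  assumes "0 < N"
  shows "0 \<le> tensor_sup N p b"
proof -
  have "replicate p 0 \<in> tuples N p"
    using assms by (auto simp: tuples_def)
  then show ?thesis
    unfolding tensor_sup_def by (meson Max_ge abs_ge_zero finite_imageI finite_tuples imageI order_trans)
qed

theorem lemma3:
  fixes p :: nat and \<alpha> :: real
  assumes "p \<ge> 1" and "\<alpha> > 0"
  shows "\<exists>C>0. \<forall>(N::nat) (J::nat \<Rightarrow> nat \<Rightarrow> real) (b::nat list \<Rightarrow> real).
           contracting N (\<lambda>i j. \<bar>J i j\<bar>) (1 - \<alpha> / real N) \<longrightarrow>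
           \<bar>\<Sum>\<sigma>\<in>Omega N. ising N J \<sigma> * tensor_poly N p b \<sigma>\<bar>
             \<le> C * tensor_sup N p b * real N powr (real p / 2)"
proof -
  define C where "C = 2 * fact p * 4 ^ p * exp (1 / \<alpha>)"
  have "\<bar>expect N (ising N J) (tensor_poly N p b)\<bar> \<le> C * tensor_sup N p b * real N powr (real p / 2)"
    if contr: "contracting N (\<lambda>i j. \<bar>J i j\<bar>) (1 - \<alpha> / real N)" for N J b
  proof (cases "N = 0")
    case True
    then show ?thesis
      using \<open>p \<ge> 1\<close> by (simp add: tensor_poly_no_sites expect_def)
  next
    case False
    have "\<bar>expect N (ising N J) (tensor_poly N p b)\<bar>
        \<le> tensor_sup N p b * expect N (ising N (\<lambda>i j. \<bar>J i j\<bar>)) (\<lambda>\<sigma>. magnetization N \<sigma> ^ p)"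
      by (rule abs_expect_tensor_poly_le)
    also have "\<dots> \<le> tensor_sup N p b * (C * real N powr (real p / 2))"
      using ising_magnetization_moment[OF contr \<open>\<alpha> > 0\<close>] False tensor_sup_nonneg
      by (intro mult_left_mono) (simp_all add: C_def)
    finally show ?thesis
      by (simp only: mult_ac)
  qed
  moreover have "C > 0"
    by (simp add: C_def)
  ultimately show ?thesis
    unfolding expect_def by blast
qed

end
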